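(* Let $X_1, X_2, \dots$ be i.i.d. $N(\mu, \sigma^2)$ with $\sigma^2>0$, and for $j\ge1$ let $\bar X_j = \frac1j\sum_{t=1}^j X_t$ and $S(j) = \sqrt{\frac1j\sum_{t=1}^j (X_t - \bar X_j)^2}$. Then for every $\epsilon > 0$, $$\frac{ \mathbb{P}\left( \bar X_j + S(j)\sqrt{k^{2/j} - 1} < \mu - \epsilon \text{ for some } 2 \leq j \leq k \right) }{ 1/k } \to \infty \quad \text{as } k \to \infty.$$ In particular, the probability on the left is not $o(1/k)$. *)

theory Defs
  imports "HOL-Probability.Probability"
begin

definition sample_mean :: "(nat \<Rightarrow> 'a \<Rightarrow> real) \<Rightarrow> nat \<Rightarrow> 'a \<Rightarrow> real" where
  "sample_mean X j \<omega> = (\<Sum>t=1..j. X t \<omega>) / real j"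

definition sample_sd :: "(nat \<Rightarrow> 'a \<Rightarrow> real) \<Rightarrow> nat \<Rightarrow> 'a \<Rightarrow> real" where
  "sample_sd X j \<omega> = sqrt ((\<Sum>t=1..j. (X t \<omega> - sample_mean X j \<omega>)\<^sup>2) / real j)"

end

theory Submission
  imports Defs
begin

(* Only the term j = 2 is needed: there the statistic is (X 1 + X 2) / 2 + |X 1 - X 2| / 2 * sqrt (k - 1),
   which is below \<mu> - \<epsilon> as soon as X 1, X 2 < c = \<mu> - \<epsilon> - 1 and |X 1 - X 2| < 1 / sqrt k.
   Tile [c - 1, c) into N \<approx> sqrt k cells of width 1 / N. If m > 0 bounds the normal density from below
   on [c - 1, c], independence makes the probability that X 1 and X 2 fall into a common cell at least
   N * (m / N)^2 = m^2 / N, so the event has probability of order 1 / sqrt k, not o(1 / k). *)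

lemma normal_density_mono:
  assumes "x \<le> y" "y \<le> \<mu>"
  shows "normal_density \<mu> \<sigma> x \<le> normal_density \<mu> \<sigma> y"
proof -
  have "\<bar>y - \<mu>\<bar> \<le> \<bar>x - \<mu>\<bar>"
    using assms by simp
  then have "(y - \<mu>)\<^sup>2 \<le> (x - \<mu>)\<^sup>2"
    by (simp only: abs_le_square_iff)
  then show ?thesis
    unfolding normal_density_def by (auto intro!: mult_left_mono divide_right_mono)
qed

lemma (in finite_measure) measure_distributed_Ico_ge:
  fixes f :: "real \<Rightarrow> real"
  assumes "distributed M lborel Y f" "l \<le> u" "0 \<le> m"
    and "\<And>x. l \<le> x \<Longrightarrow> x \<le> u \<Longrightarrow> m \<le> f x"
  shows "m * (u - l) \<le> measure M (Y -` {l..<u} \<inter> space M)"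
proof -
  have "ennreal (m * (u - l)) = (\<integral>\<^sup>+x. ennreal m * indicator {l..<u} x \<partial>lborel)"
    using assms(2,3) by (simp add: nn_integral_cmult_indicator ennreal_mult)
  also have "\<dots> \<le> (\<integral>\<^sup>+x. ennreal (f x) * indicator {l..<u} x \<partial>lborel)"
    using assms(4) by (intro nn_integral_mono) (auto simp: indicator_def intro: ennreal_leI)
  also have "\<dots> = emeasure M (Y -` {l..<u} \<inter> space M)"
    using distributed_emeasure[OF assms(1)] by simp
  finally show ?thesis
    by (simp add: emeasure_eq_measure)
qed

lemma (in prob_space) indep_vars_prob_pair:
  assumes "indep_vars M' X I" "s \<in> I" "t \<in> I" "s \<noteq> t"
    and "A \<in> sets (M' s)" "B \<in> sets (M' t)"
  shows "prob (X s -` A \<inter> X t -` B \<inter> space M) = prob (X s -` A \<inter> space M) * prob (X t -` B \<inter> space M)"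
proof -
  have "prob (\<Inter>i\<in>{s, t}. X i -` (if i = s then A else B) \<inter> space M)
      = (\<Prod>i\<in>{s, t}. prob (X i -` (if i = s then A else B) \<inter> space M))"
    by (rule indep_varsD[OF assms(1)]) (use assms(2-6) in auto)
  then show ?thesis
    using assms(4) by (simp add: Int_assoc Int_left_commute)
qed

lemma (in prob_space) prob_same_cell_ge:
  fixes X :: "'i \<Rightarrow> 'a \<Rightarrow> real" and a h m :: real and N :: nat
  assumes indep: "indep_vars (\<lambda>_. borel) X I" and st: "s \<in> I" "t \<in> I" "s \<noteq> t"
    and h: "h > 0" and m: "m \<ge> 0"
    and cell: "\<And>r l u. r \<in> {s, t} \<Longrightarrow> a \<le> l \<Longrightarrow> l \<le> u \<Longrightarrow> u \<le> a + real N * h \<Longrightarrow>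
                 m * (u - l) \<le> prob (X r -` {l..<u} \<inter> space M)"
  shows "real N * (m * h)\<^sup>2 \<le> prob {\<omega> \<in> space M. a \<le> X s \<omega> \<and> X s \<omega> < a + real N * h \<and>
                                   a \<le> X t \<omega> \<and> X t \<omega> < a + real N * h \<and> \<bar>X s \<omega> - X t \<omega>\<bar> < h}"
    (is "_ \<le> prob ?close")
proof -
  have [measurable]: "X s \<in> borel_measurable M" "X t \<in> borel_measurable M"
    using indep st unfolding indep_vars_def by auto
  define C where "C i = {a + real i * h ..< a + real (i + 1) * h}" for i :: nat
  define E where "E i = X s -` C i \<inter> X t -` C i \<inter> space M" for i :: nat
  have E_sets: "E i \<in> sets M" for i
    unfolding E_def C_def by measurable
  have C_inside: "a \<le> a + real i * h" "a + real (i + 1) * h \<le> a + real N * h" if "i < N" for i :: nat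
    using that h mult_right_mono[of "real (i + 1)" "real N" h] by auto
  have prob_E: "(m * h)\<^sup>2 \<le> prob (E i)" if "i < N" for i :: nat
  proof -
    have "m * h \<le> prob (X r -` C i \<inter> space M)" if "r \<in> {s, t}" for r
      using cell[of r "a + real i * h" "a + real (i + 1) * h"] C_inside[OF \<open>i < N\<close>] that h
      unfolding C_def by (simp add: algebra_simps)
    then have "(m * h) * (m * h) \<le> prob (X s -` C i \<inter> space M) * prob (X t -` C i \<inter> space M)"
      using m h by (intro mult_mono) auto
    also have "\<dots> = prob (E i)"
      unfolding E_def C_def by (rule indep_vars_prob_pair[OF indep st, symmetric]) auto
    finally show ?thesis
      by (simp add: power2_eq_square)
  qed
  have "disjoint_family_on C {..<N}"
    unfolding disjoint_family_on_def
  proof (intro ballI impI)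
    fix i j :: nat assume "i \<noteq> j"
    have "real i * h < real (j + 1) * h" "real j * h < real (i + 1) * h"
      if "x \<in> C i" "x \<in> C j" for x
      using that unfolding C_def by (auto simp: algebra_simps)
    then have "i < j + 1" "j < i + 1" if "x \<in> C i" "x \<in> C j" for x
      using that h by (simp_all only: mult_less_cancel_right_pos of_nat_less_iff)
    then show "C i \<inter> C j = {}"
      using \<open>i \<noteq> j\<close> by fastforce
  qed
  then have E_disjoint: "disjoint_family_on E {..<N}"
    unfolding disjoint_family_on_def E_def by blast
  have "(\<Union>i<N. E i) \<subseteq> ?close"
  proof
    fix \<omega> assume "\<omega> \<in> (\<Union>i<N. E i)"
    then obtain i where "i < N" "\<omega> \<in> E i" by auto
    then have "a + real i * h \<le> X s \<omega>" "X s \<omega> < a + real i * h + h"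
      "a + real i * h \<le> X t \<omega>" "X t \<omega> < a + real i * h + h" "\<omega> \<in> space M"
      unfolding E_def C_def by (auto simp: algebra_simps)
    moreover have "a \<le> a + real i * h" "a + real i * h + h \<le> a + real N * h"
      using C_inside[OF \<open>i < N\<close>] by (simp_all add: algebra_simps)
    ultimately show "\<omega> \<in> ?close"
      unfolding mem_Collect_eq abs_less_iff by (intro conjI) linarith+
  qed
  then have "prob (\<Union>i<N. E i) \<le> prob ?close"
    by (intro finite_measure_mono) measurable
  moreover have "prob (\<Union>i<N. E i) = (\<Sum>i<N. prob (E i))"
    using E_disjoint E_sets by (intro measure_finite_Union) auto
  moreover have "real N * (m * h)\<^sup>2 \<le> (\<Sum>i<N. prob (E i))"
    using sum_mono[of "{..<N}" "\<lambda>_. (m * h)\<^sup>2" "\<lambda>i. prob (E i)"] prob_E by simp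
  ultimately show ?thesis
    by linarith
qed

lemma (in prob_space) prob_close_below_ge:
  fixes X :: "'i \<Rightarrow> 'a \<Rightarrow> real" and c d m :: real
  assumes indep: "indep_vars (\<lambda>_. borel) X I" and st: "s \<in> I" "t \<in> I" "s \<noteq> t"
    and m: "m \<ge> 0" and d: "d \<ge> 1"
    and cell: "\<And>r l u. r \<in> {s, t} \<Longrightarrow> c - 1 \<le> l \<Longrightarrow> l \<le> u \<Longrightarrow> u \<le> c \<Longrightarrow>
                 m * (u - l) \<le> prob (X r -` {l..<u} \<inter> space M)"
  shows "m\<^sup>2 / (2 * d) \<le> prob {\<omega> \<in> space M. X s \<omega> < c \<and> X t \<omega> < c \<and> \<bar>X s \<omega> - X t \<omega>\<bar> * d < 1}"
    (is "_ \<le> prob ?close")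
proof -
  have [measurable]: "X s \<in> borel_measurable M" "X t \<in> borel_measurable M"
    using indep st unfolding indep_vars_def by auto
  define N where "N = nat \<lceil>d\<rceil>"
  have N: "d \<le> real N" "real N \<le> 2 * d" "real N > 0"
    using d unfolding N_def by linarith+
  have "m\<^sup>2 / (2 * d) \<le> m\<^sup>2 / real N"
    using N by (intro divide_left_mono) auto
  also have "\<dots> = real N * (m * (1 / N))\<^sup>2"
    using N by (simp add: power2_eq_square)
  also have "\<dots> \<le> prob {\<omega> \<in> space M. c - 1 \<le> X s \<omega> \<and> X s \<omega> < c - 1 + real N * (1 / N) \<and>
      c - 1 \<le> X t \<omega> \<and> X t \<omega> < c - 1 + real N * (1 / N) \<and> \<bar>X s \<omega> - X t \<omega>\<bar> < 1 / N}"
    using N by (intro prob_same_cell_ge[OF indep st] m cell) auto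
  also have "\<dots> \<le> prob ?close"
  proof (intro finite_measure_mono subsetI)
    fix \<omega> assume "\<omega> \<in> {\<omega> \<in> space M. c - 1 \<le> X s \<omega> \<and> X s \<omega> < c - 1 + real N * (1 / N) \<and>
      c - 1 \<le> X t \<omega> \<and> X t \<omega> < c - 1 + real N * (1 / N) \<and> \<bar>X s \<omega> - X t \<omega>\<bar> < 1 / N}"
    moreover have "\<bar>x\<bar> * d < 1" if "\<bar>x\<bar> < 1 / N" for x :: real
      using that N mult_left_mono[of d "real N" "\<bar>x\<bar>"] by (simp add: field_simps)
    ultimately show "\<omega> \<in> ?close"
      using N by auto
  qed measurable
  finally show ?thesis .
qed

lemma borel_measurable_sample_mean:
  "(\<And>t. t \<ge> 1 \<Longrightarrow> X t \<in> borel_measurable M) \<Longrightarrow> sample_mean X j \<in> borel_measurable M"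
  unfolding sample_mean_def[abs_def] by (intro borel_measurable_divide borel_measurable_sum) auto

lemma borel_measurable_sample_sd:
  assumes "\<And>t. t \<ge> 1 \<Longrightarrow> X t \<in> borel_measurable M"
  shows "sample_sd X j \<in> borel_measurable M"
proof -
  have [measurable]: "sample_mean X j \<in> borel_measurable M" "t \<in> {1..j} \<Longrightarrow> X t \<in> borel_measurable M"
    for t using assms borel_measurable_sample_mean by auto
  show ?thesis
    unfolding sample_sd_def[abs_def] by measurable
qed

lemma sample_mean_2: "sample_mean X 2 \<omega> = (X 1 \<omega> + X 2 \<omega>) / 2"
  unfolding sample_mean_def by (simp add: numeral_2_eq_2)

lemma sample_sd_2: "sample_sd X 2 \<omega> = \<bar>X 1 \<omega> - X 2 \<omega>\<bar> / 2"
proof -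
  have "(\<Sum>t=1..2. (X t \<omega> - sample_mean X 2 \<omega>)\<^sup>2) / real 2 = ((X 1 \<omega> - X 2 \<omega>) / 2)\<^sup>2"
    unfolding sample_mean_2 by (simp add: numeral_2_eq_2 power2_eq_square field_simps)
  then show ?thesis
    unfolding sample_sd_def by simp
qed

lemma sample_mean_sd_2_lt:
  assumes "X 1 \<omega> < c" "X 2 \<omega> < c" "\<bar>X 1 \<omega> - X 2 \<omega>\<bar> * sqrt k < 1"
  shows "sample_mean X 2 \<omega> + sample_sd X 2 \<omega> * sqrt (real k powr (2 / real 2) - 1) < c + 1 / 2"
proof -
  have "\<bar>X 1 \<omega> - X 2 \<omega>\<bar> * sqrt (real k - 1) \<le> \<bar>X 1 \<omega> - X 2 \<omega>\<bar> * sqrt k"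
    by (intro mult_left_mono) auto
  then show ?thesis
    using assms by (simp add: sample_mean_2 sample_sd_2) argo
qed

lemma filterlim_div_inverse_at_top:
  fixes p :: "nat \<Rightarrow> real"
  assumes "C > 0" and "\<forall>\<^sub>F k in sequentially. C / sqrt k \<le> p k"
  shows "filterlim (\<lambda>k. p k / (1 / real k)) at_top sequentially"
proof (rule filterlim_at_top_mono)
  show "filterlim (\<lambda>k::nat. C * sqrt k) at_top sequentially"
    using assms(1) by (intro filterlim_tendsto_pos_mult_at_top[OF tendsto_const]
        filterlim_compose[OF sqrt_at_top filterlim_real_sequentially]) auto
  have bound: "C * sqrt k \<le> p k / (1 / real k)" if "C / sqrt k \<le> p k" "k \<ge> 1" for k
  proof -
    have "C * sqrt k = C / sqrt k * real k"
      using that(2) by (simp add: field_simps)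
    also have "\<dots> \<le> p k * real k"
      using that(1) by (rule mult_right_mono) simp
    finally show ?thesis
      by simp
  qed
  show "\<forall>\<^sub>F k in sequentially. C * sqrt k \<le> p k / (1 / real k)"
    using assms(2) eventually_ge_at_top[of "1::nat"] by eventually_elim (rule bound)
qed

theorem proposition2:
  fixes M :: "'a measure" and X :: "nat \<Rightarrow> 'a \<Rightarrow> real"
    and \<mu> \<sigma> \<epsilon> :: real
  assumes "prob_space M"
    and "\<sigma> > 0"
    and "prob_space.indep_vars M (\<lambda>_. borel) X {1..}"
    and "\<And>t. t \<ge> 1 \<Longrightarrow> distributed M lborel (X t) (normal_density \<mu> \<sigma>)"
    and "\<epsilon> > 0"
  shows "filterlim
           (\<lambda>k::nat. measure M {\<omega> \<in> space M. \<exists>j\<in>{2..k}.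
               sample_mean X j \<omega> + sample_sd X j \<omega> * sqrt (real k powr (2 / real j) - 1) < \<mu> - \<epsilon>}
             / (1 / real k))
           at_top sequentially"
proof -
  interpret prob_space M by fact
  have "X t \<in> borel_measurable M" if "t \<ge> 1" for t
    using distributed_measurable[OF assms(4)[OF that]] by simp
  then have [measurable]: "sample_mean X j \<in> borel_measurable M" "sample_sd X j \<in> borel_measurable M" for j
    using borel_measurable_sample_mean borel_measurable_sample_sd by blast+
  define c where "c = \<mu> - \<epsilon> - 1"
  define m where "m = normal_density \<mu> \<sigma> (c - 1)"
  have "m > 0"
    unfolding m_def using normal_density_pos assms(2) by blast
  have cell: "m * (u - l) \<le> prob (X r -` {l..<u} \<inter> space M)"
    if "r \<in> {1, 2}" "c - 1 \<le> l" "l \<le> u" "u \<le> c" for r l u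
    using that \<open>m > 0\<close> assms(5) unfolding m_def c_def
    by (intro measure_distributed_Ico_ge[OF assms(4)] normal_density_mono) auto
  have "m\<^sup>2 / 2 / sqrt k \<le> prob {\<omega> \<in> space M. \<exists>j\<in>{2..k}.
          sample_mean X j \<omega> + sample_sd X j \<omega> * sqrt (real k powr (2 / real j) - 1) < \<mu> - \<epsilon>}"
    (is "_ \<le> prob ?B") if "k \<ge> 2" for k
  proof -
    have "m\<^sup>2 / 2 / sqrt k \<le> prob {\<omega> \<in> space M. X 1 \<omega> < c \<and> X 2 \<omega> < c \<and> \<bar>X 1 \<omega> - X 2 \<omega>\<bar> * sqrt k < 1}"
      using prob_close_below_ge[OF assms(3), of 1 2 m "sqrt k" c] that \<open>m > 0\<close> cell by auto
    also have "\<dots> \<le> prob ?B"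
      using that sample_mean_sd_2_lt[of X _ c k] unfolding c_def
      by (intro finite_measure_mono) (force intro!: bexI[of _ 2], measurable)
    finally show ?thesis .
  qed
  then show ?thesis
    using \<open>m > 0\<close> by (intro filterlim_div_inverse_at_top[of "m\<^sup>2 / 2"])
      (auto simp: eventually_sequentially)
qed

end
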